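(* Let $R$ be a commutative ring. The following are equivalent: (i) $R$ is a p.p. ring; (ii) $R$ is a p.f. ring and $T(R)$ is an absolutely flat ring; (iii) $T(R)$ is an absolutely flat ring and the idempotents of $R$ can be lifted along each localization of $R$, i.e. for every multiplicative subset $S\subseteq R$ and every idempotent $x\in S^{-1}R$ there is an idempotent $e\in R$ with $e/1=x$; (iv) $T(R)$ is an absolutely flat ring and for every idempotent $x\in T(R)$ there is an idempotent $e\in R$ with $e/1=x$.
   Context: All rings are commutative with identity. A ring $R$ is a p.p. ring if every principal ideal of $R$ is a projective $R$-module; it is a p.f. ring if every principal ideal of $R$ is a flat $R$-module. $Z(R)=\{f\in R:\operatorname{Ann}(f)\neq 0\}$ is the set of zero-divisors and $T(R)=S^{-1}R$ with $S=R\setminus Z(R)$ is the total ring of fractions. A ring is absolutely flat if every module over it is flat (equivalently, von Neumann regular). *)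

theory Defs
  imports Main
begin

text \<open>Throughout, the commutative ring R is the whole type 'a :: comm_ring_1.
  Ideals of R (in particular principal ideals) are viewed as R-submodules of R.\<close>

definition zero_divisors :: "'a::comm_ring_1 set" where
  "zero_divisors = {f. \<exists>g. g \<noteq> 0 \<and> f * g = 0}"

definition idempotent :: "'a::comm_ring_1 \<Rightarrow> bool" where
  "idempotent e \<longleftrightarrow> e * e = e"

definition principal_ideal :: "'a::comm_ring_1 \<Rightarrow> 'a set" where
  "principal_ideal a = {a * r | r. True}"

text \<open>The free R-module R^(X) on an index set X (here X ranges over subsets of the
  ring's own type, which suffices for submodules of R): finitely supported functions.\<close>

definition free_mod :: "'a set \<Rightarrow> ('a \<Rightarrow> 'a::comm_ring_1) set" where
  "free_mod X = {v. finite {i. v i \<noteq> 0} \<and> (\<forall>i. i \<notin> X \<longrightarrow> v i = 0)}"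

definition is_submod :: "('a \<Rightarrow> 'a::comm_ring_1) set \<Rightarrow> bool" where
  "is_submod C \<longleftrightarrow> (\<lambda>i. 0) \<in> C \<and> (\<forall>u\<in>C. \<forall>v\<in>C. (\<lambda>i. u i + v i) \<in> C)
      \<and> (\<forall>r. \<forall>v\<in>C. (\<lambda>i. r * v i) \<in> C)"

definition linear_on_ideal :: "'a set \<Rightarrow> ('a \<Rightarrow> 'a \<Rightarrow> 'a::comm_ring_1) \<Rightarrow> bool" where
  "linear_on_ideal I f \<longleftrightarrow> (\<forall>x\<in>I. \<forall>y\<in>I. f (x + y) = (\<lambda>i. f x i + f y i))
      \<and> (\<forall>r. \<forall>x\<in>I. f (r * x) = (\<lambda>i. r * f x i))"

text \<open>A module is projective iff it is (isomorphic to) a direct summand of a free module.\<close>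

definition projective_ideal :: "'a::comm_ring_1 set \<Rightarrow> bool" where
  "projective_ideal I \<longleftrightarrow> (\<exists>(X::'a set) f C.
      f ` I \<subseteq> free_mod X \<and> linear_on_ideal I f \<and> inj_on f I \<and>
      C \<subseteq> free_mod X \<and> is_submod C \<and>
      (\<forall>v\<in>free_mod X. \<exists>p\<in>I. \<exists>c\<in>C. v = (\<lambda>i. f p i + c i)) \<and>
      f ` I \<inter> C = {(\<lambda>i. 0)})"

text \<open>Flatness via the equational criterion: every linear relation among elements of
  the module is a consequence of trivial relations.\<close>

definition flat_ideal :: "'a::comm_ring_1 set \<Rightarrow> bool" where
  "flat_ideal I \<longleftrightarrow> (\<forall>n (r::nat \<Rightarrow> 'a) (m::nat \<Rightarrow> 'a).
      (\<forall>i<n. m i \<in> I) \<and> (\<Sum>i<n. r i * m i) = 0 \<longrightarrow>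
      (\<exists>k (a::nat \<Rightarrow> nat \<Rightarrow> 'a) (y::nat \<Rightarrow> 'a).
         (\<forall>j<k. y j \<in> I) \<and> (\<forall>i<n. m i = (\<Sum>j<k. a i j * y j)) \<and>
         (\<forall>j<k. (\<Sum>i<n. r i * a i j) = 0)))"

definition pp_ring :: "'a::comm_ring_1 itself \<Rightarrow> bool" where
  "pp_ring _ \<longleftrightarrow> (\<forall>a::'a. projective_ideal (principal_ideal a))"

definition pf_ring :: "'a::comm_ring_1 itself \<Rightarrow> bool" where
  "pf_ring _ \<longleftrightarrow> (\<forall>a::'a. flat_ideal (principal_ideal a))"

definition mult_subset :: "'a::comm_ring_1 set \<Rightarrow> bool" where
  "mult_subset S \<longleftrightarrow> 1 \<in> S \<and> (\<forall>s\<in>S. \<forall>t\<in>S. s * t \<in> S)"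

text \<open>The fraction a/s is the equivalence class of (a,s) under
  (a,s) ~ (b,t) iff u(at - bs) = 0 for some u in S.\<close>

definition frac :: "'a::comm_ring_1 set \<Rightarrow> 'a \<Rightarrow> 'a \<Rightarrow> ('a \<times> 'a) set" where
  "frac S a s = {(b, t). t \<in> S \<and> (\<exists>u\<in>S. u * (b * s - a * t) = 0)}"

definition loc :: "'a::comm_ring_1 set \<Rightarrow> ('a \<times> 'a) set set" where
  "loc S = {frac S a s | a s. s \<in> S}"

definition loc_mult :: "'a::comm_ring_1 set \<Rightarrow> ('a \<times> 'a) set \<Rightarrow> ('a \<times> 'a) set \<Rightarrow> ('a \<times> 'a) set" where
  "loc_mult S x y = (let p = (SOME p. p \<in> x); q = (SOME q. q \<in> y)
      in frac S (fst p * fst q) (snd p * snd q))"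

definition loc_idempotent :: "'a::comm_ring_1 set \<Rightarrow> ('a \<times> 'a) set \<Rightarrow> bool" where
  "loc_idempotent S x \<longleftrightarrow> x \<in> loc S \<and> loc_mult S x x = x"

text \<open>Absolutely flat = von Neumann regular: every x has y with x^2 y = x.\<close>

definition loc_absolutely_flat :: "'a::comm_ring_1 set \<Rightarrow> bool" where
  "loc_absolutely_flat S \<longleftrightarrow>
     (\<forall>x\<in>loc S. \<exists>y\<in>loc S. loc_mult S (loc_mult S x x) y = x)"

text \<open>Total ring of fractions T(R) = S^{-1}R with S the non-zero-divisors.\<close>

definition nonzero_divisors :: "'a::comm_ring_1 itself \<Rightarrow> 'a set" where
  "nonzero_divisors _ = UNIV - zero_divisors"

end

theory Submission
  imports Defs
begin

text \<open>Everything reduces to conditions on single elements \<open>a\<close>. The ideal \<open>aR\<close> is projective iff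
  \<open>a\<close> has a support idempotent \<open>e\<close> (\<open>ae = a\<close>, \<open>Ann(a) = (1 - e)R\<close>), and flat iff \<open>Ann(a)\<close> is pure
  (each \<open>r \<in> Ann(a)\<close> satisfies \<open>r = rs\<close> for some \<open>s \<in> Ann(a)\<close>); \<open>T(R)\<close> is von Neumann regular iff
  for every \<open>a\<close> there are \<open>b\<close> and a non-zero-divisor \<open>t\<close> with \<open>a\<^sup>2b = at\<close>.
  A support idempotent \<open>e\<close> of \<open>a\<close> makes \<open>a + 1 - e\<close> a non-zero-divisor, gives the purity witness
  \<open>1 - e\<close>, and is the lift of every idempotent \<open>a/s\<close> of every localization. Conversely, given
  \<open>a\<^sup>2b = at\<close>, a lift of the idempotent \<open>ab/t \<in> T(R)\<close> is a support idempotent of \<open>a\<close>, and so is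
  \<open>1 - s\<close> for \<open>s \<in> Ann(a)\<close> with \<open>(ab - t)s = ab - t\<close>.\<close>

section \<open>Localizations\<close>

lemma mult_subset_one: "mult_subset S \<Longrightarrow> 1 \<in> S"
  by (simp add: mult_subset_def)

lemma mult_subset_mult: "mult_subset S \<Longrightarrow> s \<in> S \<Longrightarrow> t \<in> S \<Longrightarrow> s * t \<in> S"
  by (simp add: mult_subset_def)

lemma frac_self_mem: "mult_subset S \<Longrightarrow> s \<in> S \<Longrightarrow> (a, s) \<in> frac S a s"
  by (auto simp: frac_def mult_subset_def intro!: bexI[of _ 1])

lemma frac_in_loc: "s \<in> S \<Longrightarrow> frac S a s \<in> loc S"
  by (auto simp: loc_def)

lemma frac_subset:
  assumes S: "mult_subset S" and "s \<in> S" and "u \<in> S" and u: "u * (a * t - b * s) = 0"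
  shows "frac S a s \<subseteq> frac S b t"
proof (clarsimp simp: frac_def)
  fix c w v assume "w \<in> S" "v \<in> S" and v: "v * (c * s - a * w) = 0"
  have "(u * v * s) * (c * t - b * w) = u * t * (v * (c * s - a * w)) + v * w * (u * (a * t - b * s))"
    by (simp add: algebra_simps)
  with u v have "(u * v * s) * (c * t - b * w) = 0"
    by simp
  moreover have "u * v * s \<in> S"
    using S \<open>u \<in> S\<close> \<open>v \<in> S\<close> \<open>s \<in> S\<close> by (simp add: mult_subset_mult)
  ultimately show "\<exists>x\<in>S. x * (c * t - b * w) = 0" ..
qed

lemma frac_eq_iff:
  assumes S: "mult_subset S" and s: "s \<in> S" and t: "t \<in> S"
  shows "frac S a s = frac S b t \<longleftrightarrow> (\<exists>u\<in>S. u * (a * t - b * s) = 0)"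
proof
  assume "frac S a s = frac S b t"
  with frac_self_mem[OF S s, of a] have "(a, s) \<in> frac S b t"
    by simp
  then show "\<exists>u\<in>S. u * (a * t - b * s) = 0"
    by (simp add: frac_def)
next
  assume "\<exists>u\<in>S. u * (a * t - b * s) = 0"
  then obtain u where "u \<in> S" and u: "u * (a * t - b * s) = 0" ..
  then have "u * (b * s - a * t) = 0"
    by (simp add: right_diff_distrib)
  with u \<open>u \<in> S\<close> show "frac S a s = frac S b t"
    using frac_subset[OF S s] frac_subset[OF S t] by (meson subset_antisym)
qed

lemma loc_mult_frac:
  assumes S: "mult_subset S" and s: "s \<in> S" and t: "t \<in> S"
  shows "loc_mult S (frac S a s) (frac S b t) = frac S (a * b) (s * t)"
proof -
  obtain p1 p2 where p: "(SOME p. p \<in> frac S a s) = (p1, p2)"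
    by fastforce
  obtain q1 q2 where q: "(SOME q. q \<in> frac S b t) = (q1, q2)"
    by fastforce
  have "(p1, p2) \<in> frac S a s"
    unfolding p[symmetric] by (rule someI, rule frac_self_mem[OF S s])
  moreover have "(q1, q2) \<in> frac S b t"
    unfolding q[symmetric] by (rule someI, rule frac_self_mem[OF S t])
  ultimately
  obtain u v where "p2 \<in> S" "q2 \<in> S" "u \<in> S" "v \<in> S"
    and u: "u * (p1 * s - a * p2) = 0" and v: "v * (q1 * t - b * q2) = 0"
    by (auto simp: frac_def)
  have "(u * v) * (p1 * q1 * (s * t) - a * b * (p2 * q2))
      = v * (q1 * t) * (u * (p1 * s - a * p2)) + u * (a * p2) * (v * (q1 * t - b * q2))"
    by (simp add: algebra_simps)
  with u v have "(u * v) * (p1 * q1 * (s * t) - a * b * (p2 * q2)) = 0"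
    by simp
  then have "frac S (p1 * q1) (p2 * q2) = frac S (a * b) (s * t)"
    using S s t \<open>p2 \<in> S\<close> \<open>q2 \<in> S\<close> \<open>u \<in> S\<close> \<open>v \<in> S\<close>
    by (subst frac_eq_iff) (auto simp: mult_subset_mult)
  then show ?thesis
    by (simp add: loc_mult_def p q)
qed

lemma nonzero_divisors_iff: "u \<in> nonzero_divisors R \<longleftrightarrow> (\<forall>g. u * g = 0 \<longrightarrow> g = 0)"
  by (auto simp: nonzero_divisors_def zero_divisors_def)

lemma nonzero_divisors_cancel: "u \<in> nonzero_divisors R \<Longrightarrow> u * g = 0 \<Longrightarrow> g = 0"
  by (simp add: nonzero_divisors_iff)

lemma mult_subset_nonzero_divisors: "mult_subset (nonzero_divisors R)"
  unfolding mult_subset_def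
proof (intro conjI ballI)
  show "1 \<in> nonzero_divisors R"
    by (simp add: nonzero_divisors_iff)
  fix s t assume "s \<in> nonzero_divisors R" "t \<in> nonzero_divisors R"
  then show "s * t \<in> nonzero_divisors R"
    unfolding nonzero_divisors_iff by (metis mult.assoc)
qed

lemma frac_nonzero_divisors_eq_iff:
  assumes "s \<in> nonzero_divisors R" and "t \<in> nonzero_divisors R"
  shows "frac (nonzero_divisors R) a s = frac (nonzero_divisors R) b t \<longleftrightarrow> a * t = b * s"
proof -
  have "1 \<in> nonzero_divisors R"
    by (rule mult_subset_one[OF mult_subset_nonzero_divisors])
  then show ?thesis
    unfolding frac_eq_iff[OF mult_subset_nonzero_divisors assms]
    by (metis eq_iff_diff_eq_0 mult_1 nonzero_divisors_cancel)
qed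

section \<open>Flat and projective principal ideals\<close>

text \<open>Equivalently, \<open>Ann(a) = (1 - e)R\<close> and \<open>a \<in> eR\<close>.\<close>

definition support_idempotent :: "'a::comm_ring_1 \<Rightarrow> 'a \<Rightarrow> bool" where
  "support_idempotent a e \<longleftrightarrow> idempotent e \<and> a * e = a \<and> (\<forall>r. r * a = 0 \<longrightarrow> r * e = 0)"

definition pure_annihilator :: "'a::comm_ring_1 \<Rightarrow> bool" where
  "pure_annihilator a \<longleftrightarrow> (\<forall>r. r * a = 0 \<longrightarrow> (\<exists>s. s * a = 0 \<and> r * s = r))"

lemma support_idempotentI:
  assumes a: "a * e = a" and ann: "\<And>r. r * a = 0 \<Longrightarrow> r * e = 0"
  shows "support_idempotent a e"
proof -
  have "(1 - e) * a = 0"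
    using a by (simp add: algebra_simps)
  then have "(1 - e) * e = 0"
    by (rule ann)
  then have "idempotent e"
    by (simp add: idempotent_def algebra_simps)
  with a ann show ?thesis
    by (simp add: support_idempotent_def)
qed

lemma support_idempotent_imp_pure_annihilator:
  assumes "support_idempotent a e"
  shows "pure_annihilator a"
  unfolding pure_annihilator_def
proof (intro allI impI)
  fix r assume "r * a = 0"
  with assms have "r * e = 0" and "a * e = a"
    by (simp_all add: support_idempotent_def)
  then have "(1 - e) * a = 0" and "r * (1 - e) = r"
    by (simp_all add: algebra_simps)
  then show "\<exists>s. s * a = 0 \<and> r * s = r"
    by blast
qed

lemma principal_ideal_iff: "p \<in> principal_ideal a \<longleftrightarrow> (\<exists>r. p = a * r)"
  by (auto simp: principal_ideal_def)

lemma flat_principal_ideal_imp_pure_annihilator: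
  assumes flat: "flat_ideal (principal_ideal a)"
  shows "pure_annihilator a"
  unfolding pure_annihilator_def
proof (intro allI impI)
  fix r assume "r * a = 0"
  moreover have "a \<in> principal_ideal a"
    by (metis principal_ideal_iff mult_1_right)
  ultimately have "\<exists>k (A :: nat \<Rightarrow> nat \<Rightarrow> 'a) y. (\<forall>j<k. y j \<in> principal_ideal a) \<and>
      a = (\<Sum>j<k. A 0 j * y j) \<and> (\<forall>j<k. r * A 0 j = 0)"
    using flat[unfolded flat_ideal_def, rule_format, where n = 1 and r = "\<lambda>_. r" and m = "\<lambda>_. a"]
    by simp
  then obtain k and A :: "nat \<Rightarrow> nat \<Rightarrow> 'a" and y where y: "\<forall>j<k. y j \<in> principal_ideal a"
    and a: "a = (\<Sum>j<k. A 0 j * y j)" and rA: "\<forall>j<k. r * A 0 j = 0"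
    by blast
  obtain z where z: "\<And>j. j < k \<Longrightarrow> y j = a * z j"
    using y unfolding principal_ideal_iff by metis
  define t where "t = (\<Sum>j<k. A 0 j * z j)"
  have "a * t = (\<Sum>j<k. A 0 j * y j)"
    unfolding t_def sum_distrib_left by (rule sum.cong) (simp_all add: z algebra_simps)
  with a have "(1 - t) * a = 0"
    by (simp add: algebra_simps)
  moreover have "r * t = 0"
    unfolding t_def sum_distrib_left by (simp add: rA mult.assoc[symmetric])
  then have "r * (1 - t) = r"
    by (simp add: algebra_simps)
  ultimately show "\<exists>s. s * a = 0 \<and> r * s = r"
    by blast
qed

text \<open>A relation \<open>\<Sum> r\<^sub>i (a x\<^sub>i) = 0\<close> says \<open>c = \<Sum> r\<^sub>i x\<^sub>i \<in> Ann(a)\<close>; choosing \<open>s \<in> Ann(a)\<close>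
  with \<open>c s = c\<close>, it follows from the single generator \<open>a\<close> via \<open>a x\<^sub>i = x\<^sub>i (1 - s) a\<close>.\<close>

lemma pure_annihilator_imp_flat_principal_ideal:
  assumes pure: "pure_annihilator a"
  shows "flat_ideal (principal_ideal a)"
  unfolding flat_ideal_def
proof (intro allI impI)
  fix n and r m :: "nat \<Rightarrow> 'a"
  assume "(\<forall>i<n. m i \<in> principal_ideal a) \<and> (\<Sum>i<n. r i * m i) = 0"
  then obtain x where x: "\<And>i. i < n \<Longrightarrow> m i = a * x i" and rel: "(\<Sum>i<n. r i * m i) = 0"
    unfolding principal_ideal_iff by metis
  define c where "c = (\<Sum>i<n. r i * x i)"
  have "c * a = (\<Sum>i<n. r i * m i)"
    unfolding c_def sum_distrib_right by (rule sum.cong) (simp_all add: x algebra_simps)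
  with rel obtain s where sa: "s * a = 0" and cs: "c * s = c"
    using pure unfolding pure_annihilator_def by auto
  have a_mem: "a \<in> principal_ideal a"
    by (metis principal_ideal_iff mult_1_right)
  have m_eq: "m i = x i * (1 - s) * a" if "i < n" for i
  proof -
    have "x i * (1 - s) * a = x i * a - x i * (s * a)"
      by (simp add: algebra_simps)
    with sa x[OF that] show ?thesis
      by (simp add: mult.commute)
  qed
  have "(\<Sum>i<n. r i * (x i * (1 - s))) = c - c * s"
    unfolding c_def by (simp add: right_diff_distrib sum_subtractf sum_distrib_right mult.assoc)
  with cs have rel_trivial: "(\<Sum>i<n. r i * (x i * (1 - s))) = 0"
    by simp
  show "\<exists>k (A :: nat \<Rightarrow> nat \<Rightarrow> 'a) (y :: nat \<Rightarrow> 'a). (\<forall>j<k. y j \<in> principal_ideal a) \<and>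
      (\<forall>i<n. m i = (\<Sum>j<k. A i j * y j)) \<and> (\<forall>j<k. (\<Sum>i<n. r i * A i j) = 0)"
    by (rule exI[where x = "1::nat"], rule exI[where x = "\<lambda>i (j::nat). x i * (1 - s)"],
        rule exI[where x = "\<lambda>j::nat. a"])
      (simp add: a_mem m_eq rel_trivial)
qed

lemma pf_ring_iff: "pf_ring (R::'a::comm_ring_1 itself) \<longleftrightarrow> (\<forall>a::'a. pure_annihilator a)"
  unfolding pf_ring_def
  using flat_principal_ideal_imp_pure_annihilator pure_annihilator_imp_flat_principal_ideal by blast

definition single0 :: "'a::comm_ring_1 \<Rightarrow> 'a \<Rightarrow> 'a" where
  "single0 y = (\<lambda>i. if i = 0 then y else 0)"

lemma single0_add: "(\<lambda>i. single0 x i + single0 y i) = single0 (x + y)"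
  and single0_mult: "(\<lambda>i. r * single0 x i) = single0 (r * x)"
  and single0_eq_iff: "single0 x = single0 y \<longleftrightarrow> x = y"
  and single0_eq_zero_iff: "single0 x = (\<lambda>i. 0) \<longleftrightarrow> x = 0"
  by (auto simp: single0_def fun_eq_iff)

lemma free_mod_zero: "free_mod {0} = range single0"
proof -
  have "finite {i::'a. single0 y i \<noteq> 0}" for y :: 'a
    by (rule finite_subset[of _ "{0}"]) (auto simp: single0_def)
  then show ?thesis
    by (auto simp: free_mod_def single0_def fun_eq_iff)
qed

lemma single0_mem_image_principal_ideal: "single0 (c * x) \<in> single0 ` principal_ideal c"
  by (rule imageI) (auto simp: principal_ideal_iff)

lemma is_submod_single0_principal_ideal: "is_submod (single0 ` principal_ideal c)"
  unfolding is_submod_def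
proof (intro conjI ballI allI)
  show "(\<lambda>i. 0) \<in> single0 ` principal_ideal c"
    using single0_mem_image_principal_ideal[of c 0] by (simp add: single0_def)
next
  fix u v assume "u \<in> single0 ` principal_ideal c" "v \<in> single0 ` principal_ideal c"
  then obtain x y where "u = single0 (c * x)" "v = single0 (c * y)"
    by (metis imageE principal_ideal_iff)
  then show "(\<lambda>i. u i + v i) \<in> single0 ` principal_ideal c"
    by (simp add: single0_add distrib_left[symmetric] single0_mem_image_principal_ideal)
next
  fix r v assume "v \<in> single0 ` principal_ideal c"
  then obtain y where "v = single0 (c * y)"
    by (metis imageE principal_ideal_iff)
  then show "(\<lambda>i. r * v i) \<in> single0 ` principal_ideal c"
    by (simp add: single0_mult mult.left_commute single0_mem_image_principal_ideal)
qed

lemma principal_ideal_idempotent_complement: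
  assumes e: "idempotent e" and y: "y \<in> principal_ideal e" "y \<in> principal_ideal (1 - e)"
  shows "y = 0"
proof -
  obtain p q where "y = e * p" "y = (1 - e) * q"
    using y unfolding principal_ideal_iff by blast
  moreover from e have "e * (e * p) = e * p" "e * ((1 - e) * q) = 0"
    by (simp_all add: idempotent_def algebra_simps mult.assoc[symmetric])
  ultimately show "y = 0"
    by metis
qed

text \<open>\<open>I \<cong> eR\<close> embeds into \<open>R = R\<^sup>({0})\<close> with complement \<open>(1 - e)R\<close>.\<close>

lemma projective_ideal_if_isomorphic_idempotent_ideal:
  fixes g :: "'a::comm_ring_1 \<Rightarrow> 'a"
  assumes e: "idempotent e"
    and add: "\<And>x y. x \<in> I \<Longrightarrow> y \<in> I \<Longrightarrow> g (x + y) = g x + g y"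
    and mult: "\<And>r x. x \<in> I \<Longrightarrow> g (r * x) = r * g x"
    and inj: "inj_on g I" and image: "g ` I = principal_ideal e"
  shows "projective_ideal I"
proof -
  define C where "C = single0 ` principal_ideal (1 - e)"
  have "\<exists>p\<in>I. \<exists>c\<in>C. single0 y = (\<lambda>i. single0 (g p) i + c i)" for y
  proof -
    obtain p where "p \<in> I" and gp: "g p = e * y"
      using image by (metis imageE principal_ideal_iff)
    have "single0 y = (\<lambda>i. single0 (g p) i + single0 ((1 - e) * y) i)"
      unfolding single0_add gp by (simp add: algebra_simps)
    moreover have "single0 ((1 - e) * y) \<in> C"
      unfolding C_def by (rule single0_mem_image_principal_ideal)
    ultimately show ?thesis
      using \<open>p \<in> I\<close> by blast
  qed
  moreover have "(\<lambda>p. single0 (g p)) ` I \<inter> C = {\<lambda>i. 0}"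
  proof
    show "(\<lambda>p. single0 (g p)) ` I \<inter> C \<subseteq> {\<lambda>i. 0}"
      using principal_ideal_idempotent_complement[OF e] unfolding C_def image[symmetric]
      by (auto simp: single0_eq_iff single0_eq_zero_iff)
    obtain p where "p \<in> I" and "g p = e * 0"
      using image by (metis imageE principal_ideal_iff)
    then have "single0 (g p) = (\<lambda>i. 0)" and "single0 ((1 - e) * 0) = (\<lambda>i. 0)"
      by (simp_all add: single0_eq_zero_iff)
    with \<open>p \<in> I\<close> show "{\<lambda>i. 0} \<subseteq> (\<lambda>p. single0 (g p)) ` I \<inter> C"
      unfolding C_def using single0_mem_image_principal_ideal by (metis Int_iff empty_subsetI image_eqI insert_subset)
  qed
  moreover have "linear_on_ideal I (\<lambda>p. single0 (g p))"
    by (simp add: linear_on_ideal_def add mult single0_add single0_mult)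
  moreover have "inj_on (\<lambda>p. single0 (g p)) I"
    using inj by (simp add: inj_on_def single0_eq_iff)
  ultimately show ?thesis
    unfolding projective_ideal_def
    by (intro exI[of _ "{0}"] exI[of _ "\<lambda>p. single0 (g p)"] exI[of _ C])
      (auto simp: free_mod_zero C_def is_submod_single0_principal_ideal)
qed

lemma support_idempotent_imp_projective_principal_ideal:
  assumes "support_idempotent a e"
  shows "projective_ideal (principal_ideal a)"
proof -
  from assms have e: "idempotent e" "a * e = a" and ann: "\<And>r. r * a = 0 \<Longrightarrow> r * e = 0"
    by (auto simp: support_idempotent_def)
  have cancel: "r * e = r' * e" if "a * r = a * r'" for r r'
  proof -
    have "(r - r') * a = 0"
      using that by (simp add: algebra_simps)
    then show ?thesis
      using ann[of "r - r'"] by (simp add: algebra_simps)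
  qed
  define g where "g p = (SOME r. p = a * r) * e" for p
  have g: "g (a * r) = r * e" for r
  proof -
    have "a * r = a * (SOME r'. a * r = a * r')"
      by (rule someI) (rule refl)
    then show ?thesis
      unfolding g_def by (metis cancel)
  qed
  show ?thesis
  proof (rule projective_ideal_if_isomorphic_idempotent_ideal[OF e(1), where g = g])
    fix x y assume "x \<in> principal_ideal a" "y \<in> principal_ideal a"
    then show "g (x + y) = g x + g y"
      unfolding principal_ideal_iff by (auto simp: g distrib_left[symmetric] distrib_right)
  next
    fix r x assume "x \<in> principal_ideal a"
    then show "g (r * x) = r * g x"
      unfolding principal_ideal_iff by (auto simp: g mult.left_commute mult.assoc)
  next
    show "inj_on g (principal_ideal a)"
    proof (rule inj_onI)
      fix x y assume "x \<in> principal_ideal a" "y \<in> principal_ideal a" "g x = g y"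
      then obtain r r' where "x = a * r" "y = a * r'" "r * e = r' * e"
        unfolding principal_ideal_iff by (auto simp: g)
      then show "x = y"
        using e(2) by (metis mult.assoc mult.commute)
    qed
  next
    have "principal_ideal a = range ((*) a)" "principal_ideal e = range (\<lambda>r. r * e)"
      by (auto simp: principal_ideal_def mult.commute)
    then show "g ` principal_ideal a = principal_ideal e"
      by (simp add: image_image g)
  qed
qed

lemma is_submod_sum:
  assumes "is_submod C" and "finite D" and "\<And>i. i \<in> D \<Longrightarrow> v i \<in> C"
  shows "(\<lambda>j. \<Sum>i\<in>D. v i j) \<in> C"
  using assms(2,3)
proof (induction D rule: finite_induct)
  case empty
  then show ?case
    using assms(1) by (simp add: is_submod_def)
next
  case (insert x F)
  then show ?case
    using assms(1) unfolding is_submod_def by simp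
qed

lemma free_mod_congruent_multiple:
  assumes C: "is_submod C" and v: "v \<in> free_mod X"
    and basis: "\<And>i. i \<in> X \<Longrightarrow> c i \<in> C \<and> (\<lambda>j. if j = i then 1 else 0) = (\<lambda>j. r i * w j + c i j)"
  shows "\<exists>c'\<in>C. v = (\<lambda>j. (\<Sum>i\<in>{i. v i \<noteq> 0}. v i * r i) * w j + c' j)"
proof -
  define D where "D = {i. v i \<noteq> 0}"
  have "finite D" and "D \<subseteq> X"
    using v by (auto simp: free_mod_def D_def)
  have basis_at: "(if j = i then 1 else 0) = r i * w j + c i j" if "i \<in> X" for i j
    using fun_cong[OF conjunct2[OF basis[OF that]], of j] by simp
  have pointwise: "v j = (\<Sum>i\<in>D. v i * r i) * w j + (\<Sum>i\<in>D. v i * c i j)" for j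
  proof -
    have "v j = (\<Sum>i\<in>D. v i * (if j = i then 1 else 0))"
      using \<open>finite D\<close> by (simp add: D_def if_distrib[of "(*) _"] cong: if_cong)
    also have "\<dots> = (\<Sum>i\<in>D. v i * (r i * w j + c i j))"
    proof (rule sum.cong[OF refl])
      fix i assume "i \<in> D"
      with \<open>D \<subseteq> X\<close> have "i \<in> X"
        by blast
      then show "v i * (if j = i then 1 else 0) = v i * (r i * w j + c i j)"
        by (simp only: basis_at)
    qed
    also have "\<dots> = (\<Sum>i\<in>D. v i * r i) * w j + (\<Sum>i\<in>D. v i * c i j)"
      by (simp add: distrib_left sum.distrib sum_distrib_right mult.assoc)
    finally show ?thesis .
  qed
  have "v = (\<lambda>j. (\<Sum>i\<in>D. v i * r i) * w j + (\<Sum>i\<in>D. v i * c i j))"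
    by (rule ext, rule pointwise)
  moreover have "(\<lambda>j. \<Sum>i\<in>D. v i * c i j) \<in> C"
    using C basis \<open>D \<subseteq> X\<close> \<open>finite D\<close> by (intro is_submod_sum) (auto simp: is_submod_def)
  ultimately show ?thesis
    unfolding D_def by (rule bexI)
qed

lemma unit_vector_free_mod: "i \<in> X \<Longrightarrow> (\<lambda>j. if j = i then 1 else 0) \<in> free_mod X"
proof -
  have "finite {j. (if j = i then 1 else 0) \<noteq> (0::'a::comm_ring_1)}"
    by (rule finite_subset[of _ "{i}"]) auto
  then show "i \<in> X \<Longrightarrow> (\<lambda>j. if j = i then 1 else (0::'a)) \<in> free_mod X"
    by (auto simp: free_mod_def)
qed

lemma linear_on_principal_ideal:
  assumes "linear_on_ideal (principal_ideal a) f"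
  shows "f (a * r) = (\<lambda>j. r * f a j)"
proof -
  have "a \<in> principal_ideal a"
    by (metis principal_ideal_iff mult_1_right)
  with assms show ?thesis
    unfolding linear_on_ideal_def by (metis mult.commute)
qed

lemma free_mod_decomposition_unit_vectors:
  assumes decomp: "\<forall>v\<in>free_mod X. \<exists>p\<in>principal_ideal a. \<exists>c\<in>C. v = (\<lambda>i. f p i + c i)"
    and lin: "linear_on_ideal (principal_ideal a) f"
  obtains r c
  where "\<And>i. i \<in> X \<Longrightarrow> c i \<in> C \<and> (\<lambda>j. if j = i then 1 else 0) = (\<lambda>j. r i * f a j + c i j)"
proof -
  have "\<exists>r c. c \<in> C \<and> (\<lambda>j. if j = i then 1 else 0) = (\<lambda>j. r * f a j + c j)" if "i \<in> X" for i
  proof -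
    obtain p c where "p \<in> principal_ideal a" "c \<in> C"
      and "(\<lambda>j. if j = i then 1 else 0) = (\<lambda>j. f p j + c j)"
      using decomp unit_vector_free_mod[OF \<open>i \<in> X\<close>] by blast
    moreover obtain s where "p = a * s"
      using \<open>p \<in> principal_ideal a\<close> by (auto simp: principal_ideal_iff)
    ultimately show ?thesis
      using linear_on_principal_ideal[OF lin, of s] by (intro exI[of _ s] exI[of _ c]) simp
  qed
  then show ?thesis
    using that by metis
qed

text \<open>The dual basis lemma for \<open>aR\<close>: the \<open>x\<^sub>i\<close> are the coordinates of \<open>a\<close> in a free module
  having \<open>aR\<close> as a direct summand, and \<open>a r\<^sub>i\<close> is the component of the \<open>i\<close>-th basis vector in \<open>aR\<close>.\<close>

lemma projective_principal_ideal_dual_basis: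
  fixes a :: "'a::comm_ring_1"
  assumes "projective_ideal (principal_ideal a)"
  shows "\<exists>(D :: 'a set) x r. finite D \<and> a * (\<Sum>i\<in>D. x i * r i) = a \<and> (\<forall>r' i. r' * a = 0 \<longrightarrow> r' * x i = 0)"
proof -
  let ?I = "principal_ideal a"
  obtain X f C where fI: "f ` ?I \<subseteq> free_mod X" and lin: "linear_on_ideal ?I f"
    and inj: "inj_on f ?I" and C: "is_submod C"
    and decomp: "\<forall>v\<in>free_mod X. \<exists>p\<in>?I. \<exists>c\<in>C. v = (\<lambda>i. f p i + c i)"
    and cap: "f ` ?I \<inter> C = {\<lambda>i. 0}"
    using assms unfolding projective_ideal_def by blast
  have mem: "a * r \<in> ?I" for r
    by (auto simp: principal_ideal_iff)
  note f_mult = linear_on_principal_ideal[OF lin]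
  obtain r c
    where basis: "\<And>i. i \<in> X \<Longrightarrow> c i \<in> C \<and> (\<lambda>j. if j = i then 1 else 0) = (\<lambda>j. r i * f a j + c i j)"
    using free_mod_decomposition_unit_vectors[OF decomp lin] by blast
  define t where "t = (\<Sum>i\<in>{i. f a i \<noteq> 0}. f a i * r i)"
  have "f a \<in> free_mod X"
    using fI mem[of 1] by auto
  then obtain c' where "c' \<in> C" and fa: "f a = (\<lambda>j. t * f a j + c' j)"
    unfolding t_def using free_mod_congruent_multiple[OF C _ basis] by blast
  have zero: "f 0 = (\<lambda>j. 0)"
    using f_mult[of 0] by simp
  have "(1 - t) * f a j = c' j" for j
    using fun_cong[OF fa, of j] by (simp add: algebra_simps)
  then have "f (a * (1 - t)) = c'"
    by (simp add: f_mult fun_eq_iff)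
  with \<open>c' \<in> C\<close> cap mem have "f (a * (1 - t)) = f 0"
    unfolding zero by blast
  then have "a * (1 - t) = 0"
    using inj_onD[OF inj _ mem mem[of 0]] by simp
  then have "a * t = a"
    by (simp add: algebra_simps)
  moreover have "r' * f a i = 0" if "r' * a = 0" for r' i
    using that f_mult[of r'] zero by (simp add: mult.commute fun_eq_iff)
  moreover have "finite {i. f a i \<noteq> 0}"
    using \<open>f a \<in> free_mod X\<close> by (simp add: free_mod_def)
  ultimately show ?thesis
    unfolding t_def by blast
qed

lemma projective_principal_ideal_imp_support_idempotent:
  fixes a :: "'a::comm_ring_1"
  assumes "projective_ideal (principal_ideal a)"
  shows "\<exists>e. support_idempotent a e"
proof -
  obtain D :: "'a set" and x r where "a * (\<Sum>i\<in>D. x i * r i) = a" and ann: "\<And>r' i. r' * a = 0 \<Longrightarrow> r' * x i = 0"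
    using projective_principal_ideal_dual_basis[OF assms] by blast
  moreover have "r' * (\<Sum>i\<in>D. x i * r i) = 0" if "r' * a = 0" for r'
    unfolding sum_distrib_left by (simp add: ann[OF that] mult.assoc[symmetric])
  ultimately show ?thesis
    by (blast intro: support_idempotentI)
qed

lemma pp_ring_iff: "pp_ring (R::'a::comm_ring_1 itself) \<longleftrightarrow> (\<forall>a::'a. \<exists>e. support_idempotent a e)"
  unfolding pp_ring_def
  using projective_principal_ideal_imp_support_idempotent support_idempotent_imp_projective_principal_ideal
  by blast

section \<open>The total ring of fractions\<close>

lemma support_idempotent_nonzero_divisor:
  assumes "support_idempotent a e"
  shows "a + 1 - e \<in> nonzero_divisors R"
  unfolding nonzero_divisors_iff
proof (intro allI impI)
  fix g assume g: "(a + 1 - e) * g = 0"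
  from assms have e: "e * e = e" "a * e = a" and ann: "\<And>r. r * a = 0 \<Longrightarrow> r * e = 0"
    by (auto simp: support_idempotent_def idempotent_def)
  have "a * g = e * ((a + 1 - e) * g)"
    by (simp add: algebra_simps e mult.assoc[symmetric])
  with g have "g * a = 0"
    by (simp add: mult.commute)
  then have "g * e = 0"
    by (rule ann)
  with g \<open>g * a = 0\<close> show "g = 0"
    by (simp add: algebra_simps)
qed

lemma loc_absolutely_flat_nonzero_divisors_iff:
  "loc_absolutely_flat (nonzero_divisors R) \<longleftrightarrow>
     (\<forall>a. \<exists>b. \<exists>t\<in>nonzero_divisors R. a * a * b = a * t)"
  (is "_ \<longleftrightarrow> ?regular")
proof -
  let ?T = "nonzero_divisors R"
  note T = mult_subset_nonzero_divisors[of R]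
  have one: "1 \<in> ?T"
    by (rule mult_subset_one[OF T])
  have ?regular if flat: "loc_absolutely_flat ?T"
  proof
    fix a
    obtain y where "y \<in> loc ?T"
      and y: "loc_mult ?T (loc_mult ?T (frac ?T a 1) (frac ?T a 1)) y = frac ?T a 1"
      using flat[unfolded loc_absolutely_flat_def, rule_format, OF frac_in_loc[OF one]] ..
    then obtain b t where yb: "y = frac ?T b t" and t: "t \<in> ?T"
      unfolding loc_def by blast
    from y have "frac ?T (a * a * b) t = frac ?T a 1"
      unfolding yb using one t by (simp add: loc_mult_frac[OF T])
    then have "a * a * b = a * t"
      using t one by (simp add: frac_nonzero_divisors_eq_iff)
    with t show "\<exists>b. \<exists>t\<in>?T. a * a * b = a * t"
      by blast
  qed
  moreover have "loc_absolutely_flat ?T" if regular: ?regular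
    unfolding loc_absolutely_flat_def
  proof
    fix x assume "x \<in> loc ?T"
    then obtain a s where x: "x = frac ?T a s" and s: "s \<in> ?T"
      by (auto simp: loc_def)
    obtain b t where t: "t \<in> ?T" and abt: "a * a * b = a * t"
      using regular by blast
    have "a * a * (b * s) * s = a * (s * s * t)"
      using abt by (simp add: algebra_simps) (metis mult.assoc mult.commute)
    then have "loc_mult ?T (loc_mult ?T x x) (frac ?T (b * s) t) = x"
      unfolding x using s t
      by (simp add: loc_mult_frac[OF T] mult_subset_mult[OF T] frac_nonzero_divisors_eq_iff)
    with t show "\<exists>y\<in>loc ?T. loc_mult ?T (loc_mult ?T x x) y = x"
      by (blast intro: frac_in_loc)
  qed
  ultimately show ?thesis
    by blast
qed

lemma support_idempotents_imp_loc_absolutely_flat: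
  assumes "\<forall>a::'a::comm_ring_1. \<exists>e. support_idempotent a e"
  shows "loc_absolutely_flat (nonzero_divisors (R::'a itself))"
  unfolding loc_absolutely_flat_nonzero_divisors_iff
proof
  fix a :: 'a
  obtain e where e: "support_idempotent a e"
    using assms by blast
  then have "a * a * 1 = a * (a + 1 - e)"
    by (simp add: support_idempotent_def algebra_simps)
  with support_idempotent_nonzero_divisor[OF e]
  show "\<exists>b. \<exists>t\<in>nonzero_divisors R. a * a * b = a * t"
    by blast
qed

lemma frac_support_idempotent_eq:
  assumes S: "mult_subset S" and s: "s \<in> S"
    and idem: "loc_idempotent S (frac S a s)" and e: "support_idempotent a e"
  shows "frac S e 1 = frac S a s"
proof -
  have "frac S (a * a) (s * s) = frac S a s"
    using idem by (simp add: loc_idempotent_def loc_mult_frac[OF S s s])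
  then obtain u where u: "u \<in> S" and "u * (a * a * s - a * (s * s)) = 0"
    using frac_eq_iff[OF S mult_subset_mult[OF S s s] s] by blast
  then have "(u * s * (a - s)) * a = 0"
    by (simp add: algebra_simps)
  with e have "u * s * (a - s) * e = 0" and "a * e = a"
    by (simp_all add: support_idempotent_def)
  then have "(u * s) * (e * s - a * 1) = 0"
    by (simp add: algebra_simps) (metis mult.assoc mult.commute)
  moreover have "u * s \<in> S"
    using S u s by (rule mult_subset_mult)
  ultimately show ?thesis
    using frac_eq_iff[OF S mult_subset_one[OF S] s] by blast
qed

lemma support_idempotents_imp_lift_loc_idempotent:
  fixes S :: "'a::comm_ring_1 set"
  assumes "\<forall>a::'a. \<exists>e. support_idempotent a e"
    and S: "mult_subset S" and x: "loc_idempotent S x"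
  shows "\<exists>e. idempotent e \<and> frac S e 1 = x"
proof -
  obtain a s where ax: "x = frac S a s" and s: "s \<in> S"
    using x by (auto simp: loc_idempotent_def loc_def)
  obtain e where e: "support_idempotent a e"
    using assms by blast
  with frac_support_idempotent_eq[OF S s x[unfolded ax] e] ax show ?thesis
    by (auto simp: support_idempotent_def)
qed

lemma loc_idempotent_nonzero_divisors_frac:
  assumes t: "t \<in> nonzero_divisors R" and abt: "a * a * b = a * t"
  shows "loc_idempotent (nonzero_divisors R) (frac (nonzero_divisors R) (a * b) t)"
proof -
  note T = mult_subset_nonzero_divisors[of R]
  have "a * b * (a * b) * t = a * b * (t * t)"
    using abt by (simp add: algebra_simps) (metis mult.assoc mult.commute)
  then show ?thesis
    unfolding loc_idempotent_def using t
    by (simp add: frac_in_loc loc_mult_frac[OF T] mult_subset_mult[OF T] frac_nonzero_divisors_eq_iff)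
qed

lemma support_idempotent_if_lifts_frac:
  assumes t: "t \<in> nonzero_divisors R" and abt: "a * a * b = a * t"
    and lift: "frac (nonzero_divisors R) e 1 = frac (nonzero_divisors R) (a * b) t"
  shows "support_idempotent a e"
proof -
  have et: "e * t = a * b"
    using lift frac_nonzero_divisors_eq_iff[OF mult_subset_one[OF mult_subset_nonzero_divisors] t]
    by simp
  show ?thesis
  proof (rule support_idempotentI)
    have "t * (a * e - a) = a * (e * t) - a * t"
      by (simp add: algebra_simps)
    also have "\<dots> = 0"
      using et abt by (simp add: mult.assoc)
    finally have "a * e - a = 0"
      by (rule nonzero_divisors_cancel[OF t])
    then show "a * e = a"
      by simp
  next
    fix r assume "r * a = 0"
    then have "t * (r * e) = 0"
      using et by (metis mult.assoc mult.commute mult_zero_left)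
    then show "r * e = 0"
      by (rule nonzero_divisors_cancel[OF t])
  qed
qed

lemma support_idempotent_if_pure_annihilator:
  assumes t: "t \<in> nonzero_divisors R" and abt: "a * a * b = a * t" and pure: "pure_annihilator a"
  shows "\<exists>e. support_idempotent a e"
proof -
  have "(a * b - t) * a = 0"
    using abt by (simp add: algebra_simps)
  then obtain s where sa: "s * a = 0" and rs: "(a * b - t) * s = a * b - t"
    using pure unfolding pure_annihilator_def by blast
  have "support_idempotent a (1 - s)"
  proof (rule support_idempotentI)
    show "a * (1 - s) = a"
      using sa by (simp add: algebra_simps)
  next
    fix r assume ra: "r * a = 0"
    have "t * (r * (1 - s)) = r * (a * b - t) * s - r * (a * b - t) - r * a * b * (s - 1)"
      by (simp add: algebra_simps)
    also have "\<dots> = 0"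
      using rs ra by (simp add: mult.assoc)
    finally show "r * (1 - s) = 0"
      by (rule nonzero_divisors_cancel[OF t])
  qed
  then show ?thesis ..
qed

theorem theorem2p1:
  fixes R :: "'a::comm_ring_1 itself"
  defines "T \<equiv> nonzero_divisors R"
  shows "(pp_ring R \<longleftrightarrow> pf_ring R \<and> loc_absolutely_flat T)
       \<and> (pf_ring R \<and> loc_absolutely_flat T \<longleftrightarrow>
            loc_absolutely_flat T \<and>
            (\<forall>S::'a set. mult_subset S \<longrightarrow>
               (\<forall>x. loc_idempotent S x \<longrightarrow> (\<exists>e. idempotent e \<and> frac S e 1 = x))))
       \<and> ((loc_absolutely_flat T \<and>
            (\<forall>S::'a set. mult_subset S \<longrightarrow>
               (\<forall>x. loc_idempotent S x \<longrightarrow> (\<exists>e. idempotent e \<and> frac S e 1 = x))))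
          \<longleftrightarrow>
          (loc_absolutely_flat T \<and>
            (\<forall>x. loc_idempotent T x \<longrightarrow> (\<exists>e. idempotent e \<and> frac T e 1 = x))))"
proof -
  let ?pp = "\<forall>a::'a. \<exists>e. support_idempotent a e"
  let ?lift_all = "\<forall>S::'a set. mult_subset S \<longrightarrow>
    (\<forall>x. loc_idempotent S x \<longrightarrow> (\<exists>e. idempotent e \<and> frac S e 1 = x))"
  let ?lift_T = "\<forall>x. loc_idempotent T x \<longrightarrow> (\<exists>e. idempotent e \<and> frac T e 1 = x)"
  have regular: "\<exists>b. \<exists>t\<in>T. a * a * b = a * t" if "loc_absolutely_flat T" for a :: 'a
    using that unfolding T_def loc_absolutely_flat_nonzero_divisors_iff by blast
  have ?pp if flat: "loc_absolutely_flat T" and lift: ?lift_T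
  proof
    fix a :: 'a
    obtain b t where t: "t \<in> T" and abt: "a * a * b = a * t"
      using regular[OF flat] by blast
    then obtain e where "frac T e 1 = frac T (a * b) t"
      using lift loc_idempotent_nonzero_divisors_frac unfolding T_def by blast
    with t abt show "\<exists>e. support_idempotent a e"
      unfolding T_def by (blast intro: support_idempotent_if_lifts_frac)
  qed
  moreover have ?pp if "loc_absolutely_flat T" and "\<forall>a::'a. pure_annihilator a"
    using regular[OF that(1)] that(2) unfolding T_def by (metis support_idempotent_if_pure_annihilator)
  moreover have "?pp \<Longrightarrow> \<forall>a::'a. pure_annihilator a"
    using support_idempotent_imp_pure_annihilator by blast
  moreover have "?pp \<Longrightarrow> loc_absolutely_flat T"
    unfolding T_def by (rule support_idempotents_imp_loc_absolutely_flat)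
  moreover have "?pp \<Longrightarrow> ?lift_all"
    using support_idempotents_imp_lift_loc_idempotent by blast
  moreover have "?lift_all \<Longrightarrow> ?lift_T"
    using mult_subset_nonzero_divisors unfolding T_def by blast
  ultimately show ?thesis
    unfolding pp_ring_iff pf_ring_iff by argo
qed

end
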